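(* Let $R$ be an associative ring with identity and $M$ a left $R$-module which is projective in $\sigma[M]$. Then $Nil_*(M)\subseteq Rad(M)$.
   Context: $\Lambda^{fi}(M)$ is the set of fully invariant submodules of $M$. For $N,L\leq M$, $N_ML=\sum\{f(N)\mid f\in\mathrm{Hom}_R(M,L)\}$. $Spec(\Lambda^{fi}(M))$ is the set of $Q\in\Lambda^{fi}(M)$, $Q\neq M$, such that for all $N,L\in\Lambda^{fi}(M)$, $N_ML\subseteq Q$ implies $N\subseteq Q$ or $L\subseteq Q$. The lowest radical of $M$ is $Nil_*(M)=\bigcap\{Q\mid Q\in Spec(\Lambda^{fi}(M))\}$. $Rad(M)$ is the Jacobson radical of $M$ (intersection of all maximal submodules). *)

theory Defs
  imports "HOL-Algebra.Module"
begin

text \<open>HOL-Algebra's locale module requires a commutative ring, so we define left modules directly.\<close>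

definition lmodule :: "('r, 'z) ring_scheme \<Rightarrow> ('r, 'a) module \<Rightarrow> bool" where
  "lmodule R M \<longleftrightarrow> ring R \<and> abelian_group M \<and>
     (\<forall>a\<in>carrier R. \<forall>x\<in>carrier M. a \<odot>\<^bsub>M\<^esub> x \<in> carrier M) \<and>
     (\<forall>a\<in>carrier R. \<forall>b\<in>carrier R. \<forall>x\<in>carrier M.
        (a \<oplus>\<^bsub>R\<^esub> b) \<odot>\<^bsub>M\<^esub> x = a \<odot>\<^bsub>M\<^esub> x \<oplus>\<^bsub>M\<^esub> b \<odot>\<^bsub>M\<^esub> x) \<and>
     (\<forall>a\<in>carrier R. \<forall>x\<in>carrier M. \<forall>y\<in>carrier M.
        a \<odot>\<^bsub>M\<^esub> (x \<oplus>\<^bsub>M\<^esub> y) = a \<odot>\<^bsub>M\<^esub> x \<oplus>\<^bsub>M\<^esub> a \<odot>\<^bsub>M\<^esub> y) \<and>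
     (\<forall>a\<in>carrier R. \<forall>b\<in>carrier R. \<forall>x\<in>carrier M.
        (a \<otimes>\<^bsub>R\<^esub> b) \<odot>\<^bsub>M\<^esub> x = a \<odot>\<^bsub>M\<^esub> (b \<odot>\<^bsub>M\<^esub> x)) \<and>
     (\<forall>x\<in>carrier M. \<one>\<^bsub>R\<^esub> \<odot>\<^bsub>M\<^esub> x = x)"

definition submod :: "('r, 'z) ring_scheme \<Rightarrow> ('r, 'a) module \<Rightarrow> 'a set \<Rightarrow> bool" where
  "submod R M N \<longleftrightarrow> N \<subseteq> carrier M \<and> \<zero>\<^bsub>M\<^esub> \<in> N \<and>
     (\<forall>x\<in>N. \<forall>y\<in>N. x \<oplus>\<^bsub>M\<^esub> y \<in> N) \<and> (\<forall>x\<in>N. \<ominus>\<^bsub>M\<^esub> x \<in> N) \<and>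
     (\<forall>a\<in>carrier R. \<forall>x\<in>N. a \<odot>\<^bsub>M\<^esub> x \<in> N)"

text \<open>Submodule generated by a subset S (so the sum of a family of submodules is the
  submodule generated by their union).\<close>
definition gen_submod :: "('r, 'z) ring_scheme \<Rightarrow> ('r, 'a) module \<Rightarrow> 'a set \<Rightarrow> 'a set" where
  "gen_submod R M S = carrier M \<inter> \<Inter> {N. submod R M N \<and> S \<subseteq> N}"

definition mod_hom :: "('r, 'z) ring_scheme \<Rightarrow> ('r, 'a) module \<Rightarrow> ('r, 'b) module \<Rightarrow> ('a \<Rightarrow> 'b) set" where
  "mod_hom R M N = {f. (\<forall>x\<in>carrier M. f x \<in> carrier N) \<and>
     (\<forall>x\<in>carrier M. \<forall>y\<in>carrier M. f (x \<oplus>\<^bsub>M\<^esub> y) = f x \<oplus>\<^bsub>N\<^esub> f y) \<and>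
     (\<forall>a\<in>carrier R. \<forall>x\<in>carrier M. f (a \<odot>\<^bsub>M\<^esub> x) = a \<odot>\<^bsub>N\<^esub> f x)}"

text \<open>Endomorphisms f : M \<rightarrow> M with image in L, i.e. Hom_R(M, L) for a submodule L \<le> M.\<close>
definition hom_into :: "('r, 'z) ring_scheme \<Rightarrow> ('r, 'a) module \<Rightarrow> 'a set \<Rightarrow> ('a \<Rightarrow> 'a) set" where
  "hom_into R M L = {f \<in> mod_hom R M M. f ` carrier M \<subseteq> L}"

definition prod_M :: "('r, 'z) ring_scheme \<Rightarrow> ('r, 'a) module \<Rightarrow> 'a set \<Rightarrow> 'a set \<Rightarrow> 'a set" where
  "prod_M R M N L = gen_submod R M (\<Union>f\<in>hom_into R M L. f ` N)"

definition fully_inv :: "('r, 'z) ring_scheme \<Rightarrow> ('r, 'a) module \<Rightarrow> 'a set set" where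
  "fully_inv R M = {N. submod R M N \<and> (\<forall>f\<in>mod_hom R M M. f ` N \<subseteq> N)}"

definition spec_fi :: "('r, 'z) ring_scheme \<Rightarrow> ('r, 'a) module \<Rightarrow> 'a set set" where
  "spec_fi R M = {Q \<in> fully_inv R M. Q \<noteq> carrier M \<and>
     (\<forall>N\<in>fully_inv R M. \<forall>L\<in>fully_inv R M. prod_M R M N L \<subseteq> Q \<longrightarrow> N \<subseteq> Q \<or> L \<subseteq> Q)}"

text \<open>Lowest radical Nil_*(M) (the empty intersection is M).\<close>
definition lowest_radical :: "('r, 'z) ring_scheme \<Rightarrow> ('r, 'a) module \<Rightarrow> 'a set" where
  "lowest_radical R M = carrier M \<inter> \<Inter> (spec_fi R M)"

definition maximal_submod :: "('r, 'z) ring_scheme \<Rightarrow> ('r, 'a) module \<Rightarrow> 'a set \<Rightarrow> bool" where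
  "maximal_submod R M K \<longleftrightarrow> submod R M K \<and> K \<noteq> carrier M \<and>
     (\<forall>K'. submod R M K' \<and> K \<subseteq> K' \<longrightarrow> K' = K \<or> K' = carrier M)"

text \<open>Jacobson radical Rad(M) (the empty intersection is M).\<close>
definition jac_rad :: "('r, 'z) ring_scheme \<Rightarrow> ('r, 'a) module \<Rightarrow> 'a set" where
  "jac_rad R M = carrier M \<inter> \<Inter> {K. maximal_submod R M K}"

definition M_generated :: "('r, 'z) ring_scheme \<Rightarrow> ('r, 'a) module \<Rightarrow> ('r, 'b) module \<Rightarrow> bool" where
  "M_generated R M K \<longleftrightarrow> carrier K = gen_submod R K (\<Union>f\<in>mod_hom R M K. f ` carrier M)"

text \<open>N \<in> \<sigma>[M]: N is (isomorphic to) a submodule of an M-generated module K.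
  The module K is taken with carrier in the same type as N.\<close>
definition in_sigma :: "('r, 'z) ring_scheme \<Rightarrow> ('r, 'a) module \<Rightarrow> ('r, 'b) module \<Rightarrow> bool" where
  "in_sigma R M N \<longleftrightarrow> lmodule R N \<and>
     (\<exists>K :: ('r, 'b) module. lmodule R K \<and> M_generated R M K \<and>
        (\<exists>g\<in>mod_hom R N K. inj_on g (carrier N)))"

text \<open>The modules N, L range over modules
  whose carriers live in the type ('a \<times> nat) set, which is large enough to contain
  (up to isomorphism) all modules relevant to the test.\<close>
definition projective_in_sigma :: "('r, 'z) ring_scheme \<Rightarrow> ('r, 'a) module \<Rightarrow> bool" where
  "projective_in_sigma R M \<longleftrightarrow>
     (\<forall>(N :: ('r, ('a \<times> nat) set) module) (L :: ('r, ('a \<times> nat) set) module).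
        in_sigma R M N \<longrightarrow> in_sigma R M L \<longrightarrow>
        (\<forall>g\<in>mod_hom R N L. \<forall>f\<in>mod_hom R M L. g ` carrier N = carrier L \<longrightarrow>
           (\<exists>h\<in>mod_hom R M N. \<forall>x\<in>carrier M. g (h x) = f x)))"

end

theory Submission
  imports Defs "HOL-Algebra.AbelCoset"
begin

text \<open>For a maximal submodule \<open>K\<close> of \<open>M\<close>, the largest fully invariant submodule inside \<open>K\<close>,
  \<open>Q = {y. f y \<in> K for all f \<in> End(M)}\<close>, is prime in \<open>\<Lambda>\<^sup>f\<^sup>i(M)\<close>.  Indeed, if fully invariant
  \<open>N\<close> and \<open>L\<close> both escape \<open>Q\<close>, applying endomorphisms yields \<open>n \<in> N\<close> and \<open>l \<in> L\<close> outside \<open>K\<close>.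
  Maximality gives \<open>K + L = M\<close>, so \<open>L \<rightarrow> M/K\<close> is onto, and projectivity of \<open>M\<close> lifts
  \<open>M \<rightarrow> M/K\<close> to \<open>h : M \<rightarrow> L\<close> with \<open>h x - x \<in> K\<close>.  Then \<open>h n \<in> N\<^sub>M L \<subseteq> Q \<subseteq> K\<close> forces
  \<open>n \<in> K\<close>.  So \<open>Nil\<^sub>*(M) \<subseteq> Q \<subseteq> K\<close> for every maximal \<open>K\<close>.\<close>

no_notation Sum_Type.Plus (infixr \<open><+>\<close> 65)

lemma abelian_group_hom_additiveI:
  assumes "abelian_group G" "abelian_group H"
    and "\<And>x. x \<in> carrier G \<Longrightarrow> f x \<in> carrier H"
    and "\<And>x y. \<lbrakk>x \<in> carrier G; y \<in> carrier G\<rbrakk> \<Longrightarrow> f (x \<oplus>\<^bsub>G\<^esub> y) = f x \<oplus>\<^bsub>H\<^esub> f y"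
  shows "abelian_group_hom G H f"
  using assms
  by (intro abelian_group_homI group_hom.intro group_hom_axioms.intro abelian_group.a_group)
     (auto simp: hom_def)

locale left_module =
  fixes R :: "('r, 'z) ring_scheme" and M :: "('r, 'a) module" (structure)
  assumes lmodule: "lmodule R M"
begin

lemma abelian_group: "abelian_group M"
  using lmodule by (simp add: lmodule_def)

sublocale abelian_group M
  by (fact abelian_group)

lemma ring: "ring R"
  using lmodule by (simp add: lmodule_def)

lemma smult_closed [simp]: "\<lbrakk>a \<in> carrier R; x \<in> carrier M\<rbrakk> \<Longrightarrow> a \<odot> x \<in> carrier M"
  and smult_l_distr: "\<lbrakk>a \<in> carrier R; b \<in> carrier R; x \<in> carrier M\<rbrakk> \<Longrightarrow>
    (a \<oplus>\<^bsub>R\<^esub> b) \<odot> x = a \<odot> x \<oplus> b \<odot> x"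
  and smult_r_distr: "\<lbrakk>a \<in> carrier R; x \<in> carrier M; y \<in> carrier M\<rbrakk> \<Longrightarrow>
    a \<odot> (x \<oplus> y) = a \<odot> x \<oplus> a \<odot> y"
  and smult_assoc: "\<lbrakk>a \<in> carrier R; b \<in> carrier R; x \<in> carrier M\<rbrakk> \<Longrightarrow>
    (a \<otimes>\<^bsub>R\<^esub> b) \<odot> x = a \<odot> (b \<odot> x)"
  and smult_one [simp]: "x \<in> carrier M \<Longrightarrow> \<one>\<^bsub>R\<^esub> \<odot> x = x"
  using lmodule by (auto simp: lmodule_def)

lemma smult_abelian_group_hom: "a \<in> carrier R \<Longrightarrow> abelian_group_hom M M (\<lambda>x. a \<odot> x)"
  by (intro abelian_group_hom_additiveI) (simp_all add: smult_r_distr abelian_group)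

lemma smult_zero: "a \<in> carrier R \<Longrightarrow> a \<odot> \<zero> = \<zero>"
  using abelian_group_hom.hom_zero[OF smult_abelian_group_hom] .

lemma smult_minus:
  "\<lbrakk>a \<in> carrier R; x \<in> carrier M; y \<in> carrier M\<rbrakk> \<Longrightarrow> a \<odot> (x \<ominus> y) = a \<odot> x \<ominus> a \<odot> y"
  using abelian_group_hom.hom_a_inv[OF smult_abelian_group_hom] by (simp add: minus_eq smult_r_distr)

lemma submodD:
  assumes "submod R M K"
  shows submod_subset: "K \<subseteq> carrier M" and "\<zero> \<in> K"
    and "\<lbrakk>x \<in> K; y \<in> K\<rbrakk> \<Longrightarrow> x \<oplus> y \<in> K" and "x \<in> K \<Longrightarrow> \<ominus> x \<in> K"
    and "\<lbrakk>a \<in> carrier R; x \<in> K\<rbrakk> \<Longrightarrow> a \<odot> x \<in> K"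
  using assms by (auto simp: submod_def)

lemma submod_abelian_subgroup:
  assumes "submod R M K"
  shows "abelian_subgroup K M"
proof (intro abelian_subgroupI3 additive_subgroupI subgroup.intro)
qed (use submodD[OF assms] in \<open>auto simp: a_inv_def[symmetric] abelian_group\<close>)

lemma set_add_iff: "x \<in> K <+> L \<longleftrightarrow> (\<exists>k\<in>K. \<exists>l\<in>L. x = k \<oplus> l)"
  by (auto simp: set_add_def')

lemma submod_set_add:
  assumes K: "submod R M K" and L: "submod R M L"
  shows "submod R M (K <+> L)"
proof -
  note K' = submodD[OF K] and L' = submodD[OF L]
  have "k \<oplus> l \<in> carrier M" if "k \<in> K" "l \<in> L" for k l
    using that K'(1) L'(1) by blast
  moreover have "\<zero> \<in> K <+> L"
    using K'(2) L'(2) by (force simp: set_add_iff)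
  moreover have "(k \<oplus> l) \<oplus> (k' \<oplus> l') \<in> K <+> L"
    if "k \<in> K" "l \<in> L" "k' \<in> K" "l' \<in> L" for k l k' l'
  proof -
    have "(k \<oplus> l) \<oplus> (k' \<oplus> l') = (k \<oplus> k') \<oplus> (l \<oplus> l')"
      using that K'(1) L'(1) by (simp add: subset_iff a_ac)
    then show ?thesis
      using that K'(3) L'(3) unfolding set_add_iff by blast
  qed
  moreover have "\<ominus> (k \<oplus> l) \<in> K <+> L" if "k \<in> K" "l \<in> L" for k l
  proof -
    have "\<ominus> (k \<oplus> l) = \<ominus> k \<oplus> \<ominus> l"
      using that K'(1) L'(1) by (simp add: subset_iff minus_add)
    then show ?thesis
      using that K'(4) L'(4) unfolding set_add_iff by blast
  qed
  moreover have "a \<odot> (k \<oplus> l) \<in> K <+> L" if "a \<in> carrier R" "k \<in> K" "l \<in> L" for a k l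
  proof -
    have "a \<odot> (k \<oplus> l) = a \<odot> k \<oplus> a \<odot> l"
      using that K'(1) L'(1) by (simp add: subset_iff smult_r_distr)
    then show ?thesis
      using that K'(5) L'(5) unfolding set_add_iff by blast
  qed
  ultimately show ?thesis
    unfolding submod_def by (auto simp: set_add_iff)
qed

lemma submod_zero: "submod R M {\<zero>}"
  by (simp add: submod_def smult_zero)

lemma submod_carrier: "submod R M (carrier M)"
  by (simp add: submod_def)

lemma submod_lmodule:
  assumes K: "submod R M K"
  shows "lmodule R (M\<lparr>carrier := K\<rparr>)"
proof -
  note K' = submodD[OF K]
  have "abelian_group (M\<lparr>carrier := K\<rparr>)"
  proof (rule abelian_groupI, goal_cases)
    case (6 x)
    then have "\<ominus> x \<in> K" "\<ominus> x \<oplus> x = \<zero>"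
      using K' by (auto simp: subset_iff l_neg)
    then show ?case by auto
  qed (use K' in \<open>auto simp: subset_iff a_ac\<close>)
  then show ?thesis
    using lmodule K' unfolding lmodule_def by (auto simp: subset_iff)
qed

end

lemma mod_hom_abelian_group_hom:
  assumes "lmodule R M" "lmodule R N" "f \<in> mod_hom R M N"
  shows "abelian_group_hom M N f"
  using assms by (intro abelian_group_hom_additiveI) (auto simp: lmodule_def mod_hom_def)

lemma mod_hom_id: "(\<lambda>x. x) \<in> mod_hom R M M"
  by (simp add: mod_hom_def)

lemma mod_hom_comp:
  "\<lbrakk>f \<in> mod_hom R A B; g \<in> mod_hom R B C\<rbrakk> \<Longrightarrow> (\<lambda>x. g (f x)) \<in> mod_hom R A C"
  by (simp add: mod_hom_def)

lemma mod_hom_carrier_update: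
  assumes "S \<subseteq> carrier N"
  shows "f \<in> mod_hom R A (N\<lparr>carrier := S\<rparr>) \<longleftrightarrow> f \<in> mod_hom R A N \<and> f ` carrier A \<subseteq> S"
  using assms by (auto simp: mod_hom_def)

lemma mod_hom_inclusion: "S \<subseteq> carrier N \<Longrightarrow> (\<lambda>x. x) \<in> mod_hom R (N\<lparr>carrier := S\<rparr>) N"
  by (auto simp: mod_hom_def)

lemma submod_image:
  assumes "lmodule R M" "lmodule R N" "f \<in> mod_hom R M N" and L: "submod R M L"
  shows "submod R N (f ` L)"
proof -
  interpret abelian_group_hom M N f
    using assms(1-3) by (rule mod_hom_abelian_group_hom)
  note L' = L[unfolded submod_def]
  have LM: "x \<in> carrier M" if "x \<in> L" for x
    using that L' by blast
  have fL: "f x \<in> f ` L" if "x \<in> L" for x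
    using that by (rule imageI)
  show ?thesis
    unfolding submod_def
  proof (intro conjI ballI)
    show "f ` L \<subseteq> carrier N"
      using LM by auto
    show "\<zero>\<^bsub>N\<^esub> \<in> f ` L"
      using fL[of "\<zero>\<^bsub>M\<^esub>"] L' by simp
  next
    fix u v assume "u \<in> f ` L" "v \<in> f ` L"
    then obtain x y where "x \<in> L" "y \<in> L" "u = f x" "v = f y" by blast
    then show "u \<oplus>\<^bsub>N\<^esub> v \<in> f ` L"
      using fL[of "x \<oplus>\<^bsub>M\<^esub> y"] L' LM by simp
  next
    fix u assume "u \<in> f ` L"
    then obtain x where "x \<in> L" "u = f x" by blast
    then show "\<ominus>\<^bsub>N\<^esub> u \<in> f ` L"
      using fL[of "\<ominus>\<^bsub>M\<^esub> x"] L' LM by simp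
  next
    fix a u assume "a \<in> carrier R" "u \<in> f ` L"
    then obtain x where x: "x \<in> L" "u = f x" by blast
    then have "a \<odot>\<^bsub>M\<^esub> x \<in> L" "f (a \<odot>\<^bsub>M\<^esub> x) = a \<odot>\<^bsub>N\<^esub> u"
      using L' LM assms(3) \<open>a \<in> carrier R\<close> unfolding mod_hom_def by auto
    then show "a \<odot>\<^bsub>N\<^esub> u \<in> f ` L"
      by (metis fL)
  qed
qed

lemma submod_vimage:
  assumes "lmodule R M" "lmodule R N" "f \<in> mod_hom R M N" "submod R N K"
  shows "submod R M (carrier M \<inter> f -` K)"
proof -
  interpret abelian_group_hom M N f
    using assms(1-3) by (rule mod_hom_abelian_group_hom)
  show ?thesis
    using assms(3,4) left_module.smult_closed[OF left_module.intro[OF assms(1)]]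
    unfolding submod_def mod_hom_def by auto
qed

lemma mod_hom_inv_into:
  assumes "lmodule R M" "p \<in> mod_hom R M N" "inj_on p (carrier M)"
    and "h \<in> mod_hom R A N" "h ` carrier A \<subseteq> p ` carrier M"
  shows "(\<lambda>x. inv_into (carrier M) p (h x)) \<in> mod_hom R A M"
proof -
  interpret left_module R M
    using assms(1) by (rule left_module.intro)
  let ?i = "inv_into (carrier M) p"
  have i: "?i (h x) \<in> carrier M" "p (?i (h x)) = h x" if "x \<in> carrier A" for x
  proof -
    have "h x \<in> p ` carrier M"
      using that assms(5) by blast
    then show "?i (h x) \<in> carrier M" "p (?i (h x)) = h x"
      by (auto intro: inv_into_into f_inv_into_f)
  qed
  have "?i (h (x \<oplus>\<^bsub>A\<^esub> y)) = ?i (h x) \<oplus>\<^bsub>M\<^esub> ?i (h y)"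
    if "x \<in> carrier A" "y \<in> carrier A" for x y
  proof -
    have "h (x \<oplus>\<^bsub>A\<^esub> y) = p (?i (h x) \<oplus>\<^bsub>M\<^esub> ?i (h y))"
      using that assms(2,4) i unfolding mod_hom_def by auto
    then show ?thesis
      using that i assms(3) by simp
  qed
  moreover have "?i (h (a \<odot>\<^bsub>A\<^esub> x)) = a \<odot>\<^bsub>M\<^esub> ?i (h x)"
    if "a \<in> carrier R" "x \<in> carrier A" for a x
  proof -
    have "h (a \<odot>\<^bsub>A\<^esub> x) = p (a \<odot>\<^bsub>M\<^esub> ?i (h x))"
      using that assms(2,4) i unfolding mod_hom_def by auto
    then show ?thesis
      using that i assms(3) by simp
  qed
  ultimately show ?thesis
    using i(1) by (simp add: mod_hom_def)
qed

definition compatible :: "('r, 'z) ring_scheme \<Rightarrow> ('r, 'a) module \<Rightarrow> ('a \<Rightarrow> 'b) \<Rightarrow> bool" where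
  "compatible R M p \<longleftrightarrow> (\<forall>x\<in>carrier M. \<forall>y\<in>carrier M. p x = p y \<longrightarrow>
     (\<forall>z\<in>carrier M. p (x \<oplus>\<^bsub>M\<^esub> z) = p (y \<oplus>\<^bsub>M\<^esub> z)) \<and>
     (\<forall>a\<in>carrier R. p (a \<odot>\<^bsub>M\<^esub> x) = p (a \<odot>\<^bsub>M\<^esub> y)))"

text \<open>For \<open>compatible R M p\<close> this is \<open>M\<close> modulo the kernel congruence of \<open>p\<close>, realised on
  the image of \<open>p\<close>.\<close>

definition image_module :: "('r, 'a) module \<Rightarrow> ('a \<Rightarrow> 'b) \<Rightarrow> ('r, 'b) module" where
  "image_module M p =
    \<lparr>carrier = p ` carrier M, mult = (\<lambda>u v. u), one = p \<zero>\<^bsub>M\<^esub>, zero = p \<zero>\<^bsub>M\<^esub>,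
     add = (\<lambda>u v. p (inv_into (carrier M) p u \<oplus>\<^bsub>M\<^esub> inv_into (carrier M) p v)),
     smult = (\<lambda>a u. p (a \<odot>\<^bsub>M\<^esub> inv_into (carrier M) p u))\<rparr>"

lemma image_module_carrier [simp]: "carrier (image_module M p) = p ` carrier M"
  and image_module_zero [simp]: "\<zero>\<^bsub>image_module M p\<^esub> = p \<zero>\<^bsub>M\<^esub>"
  by (simp_all add: image_module_def)

context left_module
begin

lemma compatible_add:
  assumes "compatible R M p" "x \<in> carrier M" "x' \<in> carrier M" "y \<in> carrier M" "y' \<in> carrier M"
    and "p x = p x'" "p y = p y'"
  shows "p (x \<oplus> y) = p (x' \<oplus> y')"
proof -
  have "p (x \<oplus> y) = p (y \<oplus> x')"
    using assms unfolding compatible_def by (metis a_comm)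
  also have "\<dots> = p (x' \<oplus> y')"
    using assms unfolding compatible_def by (metis a_comm)
  finally show ?thesis .
qed

lemma image_module_add:
  assumes "compatible R M p" "x \<in> carrier M" "y \<in> carrier M"
  shows "p x \<oplus>\<^bsub>image_module M p\<^esub> p y = p (x \<oplus> y)"
proof -
  let ?i = "inv_into (carrier M) p"
  have "?i (p x) \<in> carrier M" "p (?i (p x)) = p x" "?i (p y) \<in> carrier M" "p (?i (p y)) = p y"
    using assms(2,3) by (simp_all add: inv_into_into f_inv_into_f)
  then have "p (?i (p x) \<oplus> ?i (p y)) = p (x \<oplus> y)"
    using assms by (intro compatible_add)
  then show ?thesis
    by (simp add: image_module_def)
qed

lemma image_module_smult:
  assumes "compatible R M p" "a \<in> carrier R" "x \<in> carrier M"
  shows "a \<odot>\<^bsub>image_module M p\<^esub> p x = p (a \<odot> x)"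
proof -
  let ?i = "inv_into (carrier M) p"
  have "?i (p x) \<in> carrier M" "p (?i (p x)) = p x"
    using assms(3) by (simp_all add: inv_into_into f_inv_into_f)
  then have "p (a \<odot> ?i (p x)) = p (a \<odot> x)"
    using assms unfolding compatible_def by blast
  then show ?thesis
    by (simp add: image_module_def)
qed

lemma image_module_hom: "compatible R M p \<Longrightarrow> p \<in> mod_hom R M (image_module M p)"
  by (simp add: mod_hom_def image_module_add image_module_smult)

lemma lmodule_image_module:
  assumes p: "compatible R M p"
  shows "lmodule R (image_module M p)"
proof -
  note add = image_module_add[OF p] and sm = image_module_smult[OF p]
  have "abelian_group (image_module M p)"
  proof (rule abelian_groupI, goal_cases)
    case (6 u)
    then obtain x where "x \<in> carrier M" "u = p x" by auto
    then show ?case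
      using add[of "\<ominus> x" x] by (auto intro!: bexI[of _ "p (\<ominus> x)"] simp: l_neg)
  qed (auto simp: add a_ac)
  moreover have "a \<odot>\<^bsub>image_module M p\<^esub> u \<in> carrier (image_module M p)"
    if "a \<in> carrier R" "u \<in> carrier (image_module M p)" for a u
    using that sm by auto
  moreover have "(a \<oplus>\<^bsub>R\<^esub> b) \<odot>\<^bsub>image_module M p\<^esub> u
      = a \<odot>\<^bsub>image_module M p\<^esub> u \<oplus>\<^bsub>image_module M p\<^esub> b \<odot>\<^bsub>image_module M p\<^esub> u"
    if "a \<in> carrier R" "b \<in> carrier R" "u \<in> carrier (image_module M p)" for a b u
    using that ring sm add smult_l_distr by (auto simp: ring.ring_simprules(1))
  moreover have "a \<odot>\<^bsub>image_module M p\<^esub> (u \<oplus>\<^bsub>image_module M p\<^esub> v)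
      = a \<odot>\<^bsub>image_module M p\<^esub> u \<oplus>\<^bsub>image_module M p\<^esub> a \<odot>\<^bsub>image_module M p\<^esub> v"
    if "a \<in> carrier R" "u \<in> carrier (image_module M p)" "v \<in> carrier (image_module M p)" for a u v
    using that sm add smult_r_distr by auto
  moreover have "(a \<otimes>\<^bsub>R\<^esub> b) \<odot>\<^bsub>image_module M p\<^esub> u
      = a \<odot>\<^bsub>image_module M p\<^esub> (b \<odot>\<^bsub>image_module M p\<^esub> u)"
    if "a \<in> carrier R" "b \<in> carrier R" "u \<in> carrier (image_module M p)" for a b u
    using that ring sm smult_assoc by (auto simp: ring.ring_simprules(5))
  moreover have "\<one>\<^bsub>R\<^esub> \<odot>\<^bsub>image_module M p\<^esub> u = u" if "u \<in> carrier (image_module M p)" for u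
    using that ring sm by (auto simp: ring.ring_simprules(6))
  ultimately show ?thesis
    unfolding lmodule_def using ring by blast
qed

end

text \<open>The test modules in \<open>projective_in_sigma\<close> have carriers of type \<open>('a \<times> nat) set\<close>;
  tagging a coset with \<open>0\<close> lands it there.\<close>

definition quotient_map :: "('r, 'a) module \<Rightarrow> 'a set \<Rightarrow> 'a \<Rightarrow> ('a \<times> nat) set" where
  "quotient_map M K x = (K +>\<^bsub>M\<^esub> x) \<times> {0}"

context left_module
begin

lemma quotient_map_eq_iff:
  assumes K: "submod R M K" and "x \<in> carrier M" "y \<in> carrier M"
  shows "quotient_map M K x = quotient_map M K y \<longleftrightarrow> x \<ominus> y \<in> K"
proof -
  interpret abelian_subgroup K M
    using K by (rule submod_abelian_subgroup)
  have "quotient_map M K x = quotient_map M K y \<longleftrightarrow> K +> x = K +> y"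
    by (simp add: quotient_map_def Times_eq_cancel2)
  also have "\<dots> \<longleftrightarrow> x \<in> K +> y"
    using assms(2,3) by (metis a_rcos_self a_repr_independence')
  also have "\<dots> \<longleftrightarrow> x \<ominus> y \<in> K"
    using assms(2,3) by (simp add: a_rcos_module minus_eq)
  finally show ?thesis .
qed

lemma compatible_quotient_map:
  assumes K: "submod R M K"
  shows "compatible R M (quotient_map M K)"
  unfolding compatible_def
proof (intro ballI impI conjI)
  fix x y assume xy: "x \<in> carrier M" "y \<in> carrier M" "quotient_map M K x = quotient_map M K y"
  then have d: "x \<ominus> y \<in> K"
    using quotient_map_eq_iff[OF K] by simp
  fix z assume "z \<in> carrier M"
  then have "(x \<oplus> z) \<ominus> (y \<oplus> z) = x \<ominus> y"
    using xy by (simp add: minus_eq minus_add a_ac) (metis a_inv_closed a_lcomm r_neg r_zero)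
  then show "quotient_map M K (x \<oplus> z) = quotient_map M K (y \<oplus> z)"
    using d xy \<open>z \<in> carrier M\<close> quotient_map_eq_iff[OF K] by simp
next
  fix x y a assume xy: "x \<in> carrier M" "y \<in> carrier M" "quotient_map M K x = quotient_map M K y"
    and a: "a \<in> carrier R"
  then have "a \<odot> (x \<ominus> y) \<in> K"
    using quotient_map_eq_iff[OF K] submodD(5)[OF K] by simp
  then show "quotient_map M K (a \<odot> x) = quotient_map M K (a \<odot> y)"
    using xy a quotient_map_eq_iff[OF K] by (simp add: smult_minus)
qed

lemma inj_on_quotient_map_zero: "inj_on (quotient_map M {\<zero>}) (carrier M)"
proof (rule inj_onI)
  fix x y assume "x \<in> carrier M" "y \<in> carrier M" "quotient_map M {\<zero>} x = quotient_map M {\<zero>} y"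
  then have "x \<oplus> \<ominus> y = \<zero>"
    by (simp add: quotient_map_eq_iff[OF submod_zero] minus_eq)
  then show "x = y"
    using \<open>x \<in> carrier M\<close> \<open>y \<in> carrier M\<close> by (metis a_comm a_inv_closed minus_equality minus_minus)
qed

end

lemma M_generated_if_surj:
  assumes "f \<in> mod_hom R M N" "f ` carrier M = carrier N"
  shows "M_generated R M N"
proof -
  have "(\<Union>f\<in>mod_hom R M N. f ` carrier M) = carrier N"
    using assms by (auto simp: mod_hom_def)
  then show ?thesis
    by (auto simp: M_generated_def gen_submod_def)
qed

lemma in_sigma_submod:
  assumes N: "lmodule R N" and "f \<in> mod_hom R M N" "f ` carrier M = carrier N"
    and S: "submod R N S"
  shows "in_sigma R M (N\<lparr>carrier := S\<rparr>)"
proof -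
  interpret N: left_module R N
    using N by (rule left_module.intro)
  have "lmodule R (N\<lparr>carrier := S\<rparr>)" "(\<lambda>x. x) \<in> mod_hom R (N\<lparr>carrier := S\<rparr>) N"
    using S by (simp_all add: N.submod_lmodule N.submod_subset mod_hom_inclusion)
  then show ?thesis
    unfolding in_sigma_def using N M_generated_if_surj[OF assms(2,3)] inj_on_id2 by blast
qed

lemma in_sigma_if_surj:
  assumes N: "lmodule R N" and "f \<in> mod_hom R M N" "f ` carrier M = carrier N"
  shows "in_sigma R M N"
  using in_sigma_submod[OF assms left_module.submod_carrier] N by (simp add: left_module.intro)

lemma hom_into_inv_into:
  assumes "lmodule R M" "p \<in> mod_hom R M N" "inj_on p (carrier M)" "L \<subseteq> carrier M"
    and "h \<in> mod_hom R M N" "h ` carrier M \<subseteq> p ` L"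
  shows "(\<lambda>x. inv_into (carrier M) p (h x)) \<in> hom_into R M L"
proof -
  have "inv_into (carrier M) p (h x) \<in> L" if "x \<in> carrier M" for x
    using that assms(3,4,6) by (auto simp: subset_iff)
  moreover have "h ` carrier M \<subseteq> p ` carrier M"
    using assms(4,6) by blast
  ultimately show ?thesis
    using mod_hom_inv_into[OF assms(1-3,5)] by (auto simp: hom_into_def)
qed

context left_module
begin

lemma quotient_map_image_eq:
  assumes K: "submod R M K" and L: "submod R M L" and KL: "K <+> L = carrier M"
  shows "quotient_map M K ` L = quotient_map M K ` carrier M"
proof
  show "quotient_map M K ` L \<subseteq> quotient_map M K ` carrier M"
    using L submod_subset by blast
next
  show "quotient_map M K ` carrier M \<subseteq> quotient_map M K ` L"
  proof
    fix w assume "w \<in> quotient_map M K ` carrier M"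
    then obtain x where "x \<in> K <+> L" "w = quotient_map M K x"
      using KL by blast
    then obtain k l where kl: "k \<in> K" "l \<in> L" "w = quotient_map M K (k \<oplus> l)"
      unfolding set_add_iff by blast
    have "k \<in> carrier M" "l \<in> carrier M"
      using kl K L submod_subset by auto
    then have "(k \<oplus> l) \<ominus> l = k"
      by (simp add: minus_eq a_assoc r_neg)
    then have "w = quotient_map M K l"
      using kl \<open>k \<in> carrier M\<close> \<open>l \<in> carrier M\<close> quotient_map_eq_iff[OF K] by simp
    then show "w \<in> quotient_map M K ` L"
      using kl by blast
  qed
qed

lemma quotient_module:
  assumes "submod R M K"
  shows "lmodule R (image_module M (quotient_map M K))"
    and "quotient_map M K \<in> mod_hom R M (image_module M (quotient_map M K))"
  using assms by (simp_all add: lmodule_image_module image_module_hom compatible_quotient_map)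

text \<open>A copy of the submodule \<open>L\<close> inside the copy \<open>M/0\<close> of \<open>M\<close>, so that it has a carrier of the
  type required by \<open>projective_in_sigma\<close>.\<close>

lemma submod_copy:
  assumes L: "submod R M L"
  defines "e \<equiv> quotient_map M {\<zero>}"
    and "N \<equiv> (image_module M (quotient_map M {\<zero>}))\<lparr>carrier := quotient_map M {\<zero>} ` L\<rparr>"
  shows "in_sigma R M N" and "carrier N = e ` L"
    and "inv_into (carrier M) e \<in> mod_hom R N M"
    and "\<And>h. h \<in> mod_hom R M N \<Longrightarrow> (\<lambda>x. inv_into (carrier M) e (h x)) \<in> hom_into R M L"
proof -
  have e: "lmodule R (image_module M e)" "e \<in> mod_hom R M (image_module M e)"
    "inj_on e (carrier M)"
    unfolding e_def using quotient_module[OF submod_zero] inj_on_quotient_map_zero by auto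
  have N: "N = (image_module M e)\<lparr>carrier := e ` L\<rparr>"
    by (simp add: N_def e_def)
  have LM: "L \<subseteq> carrier M"
    using L by (rule submod_subset)
  have eL: "submod R (image_module M e) (e ` L)" "e ` L \<subseteq> carrier (image_module M e)"
    using submod_image[OF lmodule e(1,2) L] LM by auto
  show "in_sigma R M N"
    unfolding N using in_sigma_submod[OF e(1,2) _ eL(1)] by simp
  show "carrier N = e ` L"
    by (simp add: N)
  show "inv_into (carrier M) e \<in> mod_hom R N M"
    unfolding N using mod_hom_inv_into[OF lmodule e(2,3) mod_hom_inclusion[OF eL(2)]] LM
    by auto
  fix h assume "h \<in> mod_hom R M N"
  then have "h \<in> mod_hom R M (image_module M e)" "h ` carrier M \<subseteq> e ` L"
    unfolding N mod_hom_carrier_update[OF eL(2)] by auto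
  then show "(\<lambda>x. inv_into (carrier M) e (h x)) \<in> hom_into R M L"
    by (rule hom_into_inv_into[OF lmodule e(2,3) LM])
qed

text \<open>Projectivity applied to the epimorphism \<open>L \<rightarrow> M/K\<close>.\<close>

lemma projective_lift_modulo:
  assumes proj: "projective_in_sigma R M"
    and K: "submod R M K" and L: "submod R M L" and KL: "K <+> L = carrier M"
  shows "\<exists>h\<in>hom_into R M L. \<forall>x\<in>carrier M. h x \<ominus> x \<in> K"
proof -
  define e where "e = quotient_map M {\<zero>}"
  define i where "i = inv_into (carrier M) e"
  define N where "N = (image_module M e)\<lparr>carrier := e ` L\<rparr>"
  define q where "q = quotient_map M K"
  define Q where "Q = image_module M q"
  note copy = submod_copy[OF L, folded e_def, folded i_def N_def]
  have q: "lmodule R Q" "q \<in> mod_hom R M Q"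
    unfolding q_def Q_def using quotient_module[OF K] by auto
  have sigma_Q: "in_sigma R M Q"
    using in_sigma_if_surj[OF q] by (simp add: Q_def)
  have g: "(\<lambda>u. q (i u)) \<in> mod_hom R N Q"
    using mod_hom_comp[OF copy(3) q(2)] .
  have "(\<lambda>u. q (i u)) ` carrier N = q ` L"
    using inj_on_quotient_map_zero submod_subset[OF L] by (force simp: copy(2) e_def i_def)
  then have g_onto: "(\<lambda>u. q (i u)) ` carrier N = carrier Q"
    using quotient_map_image_eq[OF K L KL] by (simp add: q_def Q_def)
  obtain h where h: "h \<in> mod_hom R M N" "\<forall>x\<in>carrier M. q (i (h x)) = q x"
    using proj[unfolded projective_in_sigma_def, rule_format, OF copy(1) sigma_Q g q(2) g_onto]
    by blast
  define h' where "h' x = i (h x)" for x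
  have "h' \<in> hom_into R M L"
    unfolding h'_def using copy(4)[OF h(1)] .
  moreover have "h' x \<ominus> x \<in> K" if "x \<in> carrier M" for x
  proof -
    have "h' x \<in> carrier M"
      using \<open>h' \<in> hom_into R M L\<close> that by (auto simp: hom_into_def mod_hom_def)
    moreover have "q (h' x) = q x"
      using h(2) that by (simp add: h'_def)
    ultimately show ?thesis
      using that quotient_map_eq_iff[OF K] by (simp add: q_def)
  qed
  ultimately show ?thesis
    by blast
qed

end

definition fully_inv_core :: "('r, 'z) ring_scheme \<Rightarrow> ('r, 'a) module \<Rightarrow> 'a set \<Rightarrow> 'a set" where
  "fully_inv_core R M K = {y \<in> carrier M. \<forall>f\<in>mod_hom R M M. f y \<in> K}"

lemma fully_inv_core_subset: "fully_inv_core R M K \<subseteq> K"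
  by (auto simp: fully_inv_core_def dest: bspec[OF _ mod_hom_id])

lemma hom_into_image_subset_prod_M:
  assumes "h \<in> hom_into R M L" "N \<subseteq> carrier M"
  shows "h ` N \<subseteq> prod_M R M N L"
proof -
  have "h ` N \<subseteq> (\<Union>f\<in>hom_into R M L. f ` N)"
    using assms(1) by blast
  moreover have "h ` N \<subseteq> carrier M"
    using assms by (auto simp: hom_into_def mod_hom_def)
  ultimately show ?thesis
    unfolding prod_M_def gen_submod_def by blast
qed

context left_module
begin

lemma submod_INT:
  "(\<And>i. i \<in> I \<Longrightarrow> submod R M (S i)) \<Longrightarrow> submod R M (carrier M \<inter> (\<Inter>i\<in>I. S i))"
  by (auto simp: submod_def)

lemma fully_inv_core_fully_inv:
  assumes K: "submod R M K"
  shows "fully_inv_core R M K \<in> fully_inv R M"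
proof -
  have "fully_inv_core R M K = carrier M \<inter> (\<Inter>f\<in>mod_hom R M M. carrier M \<inter> f -` K)"
    by (auto simp: fully_inv_core_def)
  also have "submod R M \<dots>"
    using submod_vimage[OF lmodule lmodule _ K] by (rule submod_INT)
  finally have "submod R M (fully_inv_core R M K)" .
  moreover have "f y \<in> fully_inv_core R M K"
    if f: "f \<in> mod_hom R M M" and y: "y \<in> fully_inv_core R M K" for f y
  proof -
    have "f y \<in> carrier M"
      using f y by (auto simp: mod_hom_def fully_inv_core_def)
    moreover have "g (f y) \<in> K" if "g \<in> mod_hom R M M" for g
    proof -
      have "\<forall>h\<in>mod_hom R M M. h y \<in> K"
        using y by (simp add: fully_inv_core_def)
      from bspec[OF this mod_hom_comp[OF f that]] show ?thesis
        by simp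
    qed
    ultimately show ?thesis
      by (simp add: fully_inv_core_def)
  qed
  ultimately show ?thesis
    by (auto simp: fully_inv_def)
qed

lemma fully_inv_not_subset_core:
  assumes "N \<in> fully_inv R M" "\<not> N \<subseteq> fully_inv_core R M K"
  obtains n where "n \<in> N" "n \<notin> K"
proof -
  obtain y where y: "y \<in> N" "y \<notin> fully_inv_core R M K"
    using assms(2) by blast
  moreover have "y \<in> carrier M"
    using assms(1) y(1) submod_subset by (auto simp: fully_inv_def)
  ultimately obtain f where "f \<in> mod_hom R M M" "f y \<notin> K"
    by (auto simp: fully_inv_core_def)
  moreover have "f y \<in> N"
    using assms(1) calculation(1) y(1) by (auto simp: fully_inv_def)
  ultimately show thesis
    using that by blast
qed

lemma maximal_submod_set_add:
  assumes K: "maximal_submod R M K" and L: "submod R M L" and "l \<in> L" "l \<notin> K"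
  shows "K <+> L = carrier M"
proof -
  have KM: "submod R M K"
    using K by (simp add: maximal_submod_def)
  have "k \<in> K <+> L" if "k \<in> K" for k
    using that submodD[OF KM] submodD(2)[OF L] unfolding set_add_iff by (metis r_zero subsetD)
  moreover have "l \<in> K <+> L"
    using assms(3,4) submodD[OF KM] submodD(1)[OF L] unfolding set_add_iff by (metis l_zero subsetD)
  ultimately show ?thesis
    using K submod_set_add[OF KM L] assms(4) unfolding maximal_submod_def by blast
qed

lemma fully_inv_core_prime:
  assumes proj: "projective_in_sigma R M" and K: "maximal_submod R M K"
    and N: "N \<in> fully_inv R M" and L: "L \<in> fully_inv R M"
    and NL: "prod_M R M N L \<subseteq> fully_inv_core R M K"
  shows "N \<subseteq> fully_inv_core R M K \<or> L \<subseteq> fully_inv_core R M K"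
proof (rule ccontr)
  assume "\<not> (N \<subseteq> fully_inv_core R M K \<or> L \<subseteq> fully_inv_core R M K)"
  then obtain n l where n: "n \<in> N" "n \<notin> K" and l: "l \<in> L" "l \<notin> K"
    using fully_inv_not_subset_core[OF N] fully_inv_not_subset_core[OF L] by metis
  have KM: "submod R M K"
    using K by (simp add: maximal_submod_def)
  have NM: "N \<subseteq> carrier M" and LM: "submod R M L"
    using N L submod_subset by (auto simp: fully_inv_def)
  obtain h where h: "h \<in> hom_into R M L" "\<forall>x\<in>carrier M. h x \<ominus> x \<in> K"
    using projective_lift_modulo[OF proj KM LM maximal_submod_set_add[OF K LM l]] by blast
  have "n \<in> carrier M" "h n \<in> carrier M"
    using n(1) NM h(1) by (auto simp: hom_into_def mod_hom_def)
  moreover have "h n \<in> prod_M R M N L"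
    using hom_into_image_subset_prod_M[OF h(1) NM] n(1) by (rule subsetD[OF _ imageI])
  then have "h n \<in> K"
    using NL fully_inv_core_subset[of R M K] by blast
  moreover have "h n \<ominus> n \<in> K"
    using h(2) calculation(1) by blast
  ultimately have "h n \<oplus> \<ominus> (h n \<ominus> n) \<in> K"
    using submodD(3,4)[OF KM] by blast
  moreover have "h n \<oplus> \<ominus> (h n \<ominus> n) = n"
    using \<open>n \<in> carrier M\<close> \<open>h n \<in> carrier M\<close> by (simp add: minus_eq minus_add minus_minus r_neg2)
  ultimately show False
    using n(2) by simp
qed

lemma fully_inv_core_spec_fi:
  assumes proj: "projective_in_sigma R M" and K: "maximal_submod R M K"
  shows "fully_inv_core R M K \<in> spec_fi R M"
proof -
  have KM: "submod R M K" "K \<noteq> carrier M"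
    using K by (auto simp: maximal_submod_def)
  then have "fully_inv_core R M K \<noteq> carrier M"
    using fully_inv_core_subset[of R M K] submod_subset[OF KM(1)] by blast
  then show ?thesis
    using fully_inv_core_fully_inv[OF KM(1)] fully_inv_core_prime[OF proj K]
    by (simp add: spec_fi_def)
qed

end

theorem proposition4p38:
  fixes R :: "('r, 'z) ring_scheme" and M :: "('r, 'a) module"
  assumes "ring R"
    and "lmodule R M"
    and "projective_in_sigma R M"
  shows "lowest_radical R M \<subseteq> jac_rad R M"
proof
  interpret left_module R M
    using assms(2) by (rule left_module.intro)
  fix x assume x: "x \<in> lowest_radical R M"
  have "x \<in> K" if "maximal_submod R M K" for K
    using x fully_inv_core_spec_fi[OF assms(3) that] fully_inv_core_subset[of R M K]
    unfolding lowest_radical_def by blast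
  then show "x \<in> jac_rad R M"
    using x by (simp add: lowest_radical_def jac_rad_def)
qed

end
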